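(* For $h\in(0,1)$, every finite $\Lambda\subset\mathbb Z^d$ and all $t\in\mathbb N^*$, $$|\Lambda|\,P\Big[|\bar N_{t-1}|^h\,\big|(\bar a*\rho_{t-1})^2\big|\Big]\ge P\big[|\bar N_{t-1}|^h\big]-2\,P_S^0(S_t\notin\Lambda)^h,$$ where $|\Lambda|$ is the cardinality of $\Lambda$.
   Context: Let $d\ge1$. For $x\in\mathbb R^d$, $|x|=\sum_i|x_i|$; for $\xi\in\mathbb R^{\mathbb Z^d}$, $|\xi|=\sum_{x}|\xi_x|$; $\xi^2$ denotes $(\xi_x^2)_x$; convolution $(f*g)_x=\sum_yf_{x-y}g_y$. Let $A_t=(A_{t,x,y})_{x,y\in\mathbb Z^d}$, $t=1,2,\dots$, be i.i.d. random matrices on a probability space $(\Omega,\mathcal F,P)$ such that: (i) $A_{1,x,y}\ge0$; (ii) the columns $\{A_{1,\cdot,y}\}_{y\in\mathbb Z^d}$ are independent; (iii) $P[A_{1,x,y}^2]<\infty$ for all $x,y$; (iv) there is a nonrandom $r_A\in\mathbb N$ with $A_{1,x,y}=0$ a.s. if $|x-y|>r_A$; (v) $(A_{1,x+z,y+z})_{x,y}$ has the same law as $A_1$ for every $z\in\mathbb Z^d$; (vi) with $a_y=P[A_{1,0,y}]$, the set $\{x:\sum_y a_{x+y}a_y\neq0\}$ contains a linear basis of $\mathbb R^d$. Put $|a|=\sum_y a_y$, $\bar a_y=a_y/|a|$. Let $N_0=(\delta_{0,x})_{x\in\mathbb Z^d}$ and $N_{t,y}=\sum_xN_{t-1,x}A_{t,x,y}$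 ($t\ge1$), $|N_t|=\sum_yN_{t,y}$, $\bar N_{t,x}=|a|^{-t}N_{t,x}$, $\rho_{t,x}=\frac{N_{t,x}}{|N_t|}\mathbf 1_{\{|N_t|>0\}}$. $((S_t)_{t\in\mathbb N},P_S^0)$ is the random walk started at $0$ with step law $\bar a$. *)

theory Defs
  imports "HOL-Probability.Probability"
begin

text \<open>Sites of Z^d are modelled as int ^ 'd with 'd a finite type (d = CARD('d) \<ge> 1).\<close>

definition l1norm :: "int ^ 'd \<Rightarrow> int" where
  "l1norm x = (\<Sum>i\<in>UNIV. \<bar>x $ i\<bar>)"

definition total :: "(int ^ 'd \<Rightarrow> real) \<Rightarrow> real" where
  "total \<xi> = (\<Sum>\<^sub>\<infinity>x. \<bar>\<xi> x\<bar>)"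

definition conv :: "(int ^ 'd \<Rightarrow> real) \<Rightarrow> (int ^ 'd \<Rightarrow> real) \<Rightarrow> int ^ 'd \<Rightarrow> real" where
  "conv f g x = (\<Sum>\<^sub>\<infinity>y. f (x - y) * g y)"

fun popN :: "(nat \<Rightarrow> 'w \<Rightarrow> int ^ 'd \<Rightarrow> int ^ 'd \<Rightarrow> real) \<Rightarrow> nat \<Rightarrow> 'w \<Rightarrow> int ^ 'd \<Rightarrow> real" where
  "popN A 0 \<omega> x = (if x = 0 then 1 else 0)"
| "popN A (Suc t) \<omega> y = (\<Sum>\<^sub>\<infinity>x. popN A t \<omega> x * A (Suc t) \<omega> x y)"

definition meanA :: "'w measure \<Rightarrow> (nat \<Rightarrow> 'w \<Rightarrow> int ^ 'd \<Rightarrow> int ^ 'd \<Rightarrow> real) \<Rightarrow> int ^ 'd \<Rightarrow> real" where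
  "meanA M A y = (\<integral>\<omega>. A 1 \<omega> 0 y \<partial>M)"

definition abar :: "'w measure \<Rightarrow> (nat \<Rightarrow> 'w \<Rightarrow> int ^ 'd \<Rightarrow> int ^ 'd \<Rightarrow> real) \<Rightarrow> int ^ 'd \<Rightarrow> real" where
  "abar M A y = meanA M A y / total (meanA M A)"

definition Nbar :: "'w measure \<Rightarrow> (nat \<Rightarrow> 'w \<Rightarrow> int ^ 'd \<Rightarrow> int ^ 'd \<Rightarrow> real) \<Rightarrow> nat \<Rightarrow> 'w \<Rightarrow> int ^ 'd \<Rightarrow> real" where
  "Nbar M A t \<omega> x = popN A t \<omega> x / total (meanA M A) ^ t"

definition rho :: "(nat \<Rightarrow> 'w \<Rightarrow> int ^ 'd \<Rightarrow> int ^ 'd \<Rightarrow> real) \<Rightarrow> nat \<Rightarrow> 'w \<Rightarrow> int ^ 'd \<Rightarrow> real" where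
  "rho A t \<omega> x = (if total (popN A t \<omega>) > 0 then popN A t \<omega> x / total (popN A t \<omega>) else 0)"

text \<open>Law of S_t for the random walk started at 0 with step law p: rw_dist p t x = P_S^0(S_t = x).\<close>
fun rw_dist :: "(int ^ 'd \<Rightarrow> real) \<Rightarrow> nat \<Rightarrow> int ^ 'd \<Rightarrow> real" where
  "rw_dist p 0 x = (if x = 0 then 1 else 0)"
| "rw_dist p (Suc t) x = (\<Sum>\<^sub>\<infinity>y. rw_dist p t (x - y) * p y)"

definition to_real_vec :: "int ^ 'd \<Rightarrow> real ^ 'd" where
  "to_real_vec x = (\<chi> i. real_of_int (x $ i))"

end

theory Submission
  imports Defs
begin

text \<open>
  Proof of Lemma 3.4.  Write \<open>T = t - 1\<close>, \<open>n = |N\<^sub>T|/|a|\<^sup>T\<close> and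
  \<open>c = abar * \<rho>\<^sub>T\<close>, where \<open>abar = a/|a|\<close> is the normalised mean.  All matrices have range \<open>r\<^sub>A\<close>,
  so almost surely \<open>N\<^sub>T\<close> lives on the finite \<open>\<ell>\<^sup>1\<close>-ball of radius \<open>T r\<^sub>A\<close> and, when
  \<open>N\<^sub>T \<noteq> 0\<close>, \<open>c\<close> is a probability vector on the ball of radius \<open>(T + 1) r\<^sub>A\<close>.
  Cauchy--Schwarz on \<open>\<Lambda>\<close> together with \<open>m\<^sup>2 \<ge> 2m - 1\<close> gives
  \<open>|\<Lambda>| |c\<^sup>2| \<ge> 1 - 2q\<close> with \<open>q = c(\<Lambda>\<^sup>c)\<close>; multiplying by \<open>n\<^sup>h\<close> and using \<open>q \<le> q\<^sup>h\<close> yields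
  the pointwise bound \<open>|\<Lambda>| n\<^sup>h |c\<^sup>2| \<ge> n\<^sup>h - 2 Y\<^sup>h\<close>, where \<open>Y = n q\<close> is the mass of
  \<open>abar * N\<^sub>T/|a|\<^sup>T\<close> outside \<open>\<Lambda>\<close>.  Taking expectations, Jensen's inequality gives
  \<open>P[Y\<^sup>h] \<le> P[Y]\<^sup>h\<close>, and \<open>P[Y] = P\<^sub>S(S\<^sub>t \<notin> \<Lambda>)\<close> because, by independence of \<open>N\<^sub>s\<close> and
  \<open>A\<^sub>s\<^sub>+\<^sub>1\<close>, the mean of \<open>N\<^sub>s\<close> is the \<open>s\<close>-fold convolution power of \<open>a\<close>.
\<close>

subsection \<open>Sums with finite support\<close>

lemma infsum_finite_support:
  fixes f :: "'a \<Rightarrow> real"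
  assumes "finite F" "F \<subseteq> S" "\<And>x. x \<in> S - F \<Longrightarrow> f x = 0"
  shows "infsum f S = sum f F"
  using has_sum_finite_neutralI[OF assms refl] by (rule infsumI)

lemma total_finite_support:
  assumes "finite F" "\<And>x. x \<notin> F \<Longrightarrow> f x = 0"
  shows "total f = (\<Sum>x\<in>F. \<bar>f x\<bar>)"
  unfolding total_def by (rule infsum_finite_support) (use assms in auto)

lemma total_nonneg: "0 \<le> total f"
  unfolding total_def by (rule infsum_nonneg) simp

lemma sum_translate_support:
  fixes p :: "int ^ 'd::finite \<Rightarrow> real"
  assumes "finite G" "\<And>x. x \<notin> G \<Longrightarrow> p (x - y) = 0" "finite B" "\<And>z. z \<notin> B \<Longrightarrow> p z = 0"
  shows "(\<Sum>x\<in>G. p (x - y)) = (\<Sum>z\<in>B. p z)"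
proof -
  have bij: "bij_betw (\<lambda>x. x - y) UNIV UNIV"
    by (rule bij_betwI[of _ _ _ "\<lambda>z. z + y"]) auto
  have "(\<Sum>x\<in>G. p (x - y)) = (\<Sum>\<^sub>\<infinity>x. p (x - y))"
    by (rule infsum_finite_support[symmetric]) (use assms in auto)
  also have "\<dots> = (\<Sum>\<^sub>\<infinity>z. p z)"
    by (rule infsum_reindex_bij_betw[OF bij])
  also have "\<dots> = (\<Sum>z\<in>B. p z)"
    by (rule infsum_finite_support) (use assms in auto)
  finally show ?thesis .
qed

lemma infsum_nat_real_eq:
  fixes g :: "nat \<Rightarrow> real"
  shows "infsum g UNIV = (if (\<Sum>n. ennreal \<bar>g n\<bar>) \<noteq> top then suminf g else 0)"
proof (cases "(\<Sum>n. ennreal \<bar>g n\<bar>) \<noteq> top")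
  case True
  then have s: "summable (\<lambda>n. norm (g n))"
    using summable_suminf_not_top[of "\<lambda>n. \<bar>g n\<bar>"] by auto
  then have "(g has_sum suminf g) UNIV"
    using norm_summable_imp_has_sum[OF s] summable_norm_cancel summable_sums by blast
  then show ?thesis using True by (simp add: infsumI)
next
  case False
  then have "\<not> summable (\<lambda>n. norm (g n))"
    using ennreal_suminf_neq_top[of "\<lambda>n. \<bar>g n\<bar>"] by auto
  then have "\<not> g summable_on UNIV"
    using summable_on_UNIV_nonneg_real_iff[of "\<lambda>n. norm (g n)"]
      summable_on_iff_abs_summable_on_real by auto
  then show ?thesis using False by (simp add: infsum_not_exists)
qed

text \<open>Pointwise infinite sums over a countable index set preserve Borel measurability;
  this is what makes the population \<open>N\<^sub>t\<close> a random variable.\<close>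
lemma measurable_infsum_countable [measurable (raw)]:
  fixes f :: "'i::countable \<Rightarrow> 'a \<Rightarrow> real"
  assumes "\<And>i. f i \<in> borel_measurable N"
  shows "(\<lambda>\<omega>. \<Sum>\<^sub>\<infinity>i. f i \<omega>) \<in> borel_measurable N"
proof (cases "finite (UNIV :: 'i set)")
  case True
  then show ?thesis using assms by simp
next
  case False
  define e where "e = from_nat_into (UNIV :: 'i set)"
  have b: "bij_betw e UNIV UNIV"
    unfolding e_def using False by (intro bij_betw_from_nat_into) auto
  have "(\<lambda>\<omega>. \<Sum>\<^sub>\<infinity>i. f i \<omega>) = (\<lambda>\<omega>. \<Sum>\<^sub>\<infinity>n. f (e n) \<omega>)"
    by (intro ext) (rule infsum_reindex_bij_betw[OF b, symmetric])
  also have "\<dots> \<in> borel_measurable N"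
    unfolding infsum_nat_real_eq using assms by measurable
  finally show ?thesis .
qed

subsection \<open>Balls of the \<open>\<ell>\<^sup>1\<close> norm\<close>

definition l1ball :: "int \<Rightarrow> (int ^ 'd::finite) set" where
  "l1ball r = {x. l1norm x \<le> r}"

lemma mem_l1ball [simp]: "x \<in> l1ball r \<longleftrightarrow> l1norm x \<le> r"
  unfolding l1ball_def by simp

lemma l1norm_zero [simp]: "l1norm 0 = 0"
  unfolding l1norm_def by simp

lemma l1norm_triangle: "l1norm (x + y) \<le> l1norm x + l1norm y"
  unfolding l1norm_def by (simp add: sum.distrib[symmetric] abs_triangle_ineq sum_mono)

lemma l1norm_minus_commute: "l1norm (x - y) = l1norm (y - x)"
  unfolding l1norm_def by (metis abs_minus_commute vector_minus_component)

lemma l1norm_far: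
  assumes "l1norm x \<le> r" "r + R < l1norm y"
  shows "R < l1norm (y - x)"
  using l1norm_triangle[of x "y - x"] assms by simp

lemma finite_l1ball [simp]: "finite (l1ball r :: (int ^ 'd::finite) set)"
proof -
  have comp: "x $ i \<in> {-r..r}" if "x \<in> l1ball r" for x :: "int ^ 'd" and i
  proof -
    have "\<bar>x $ i\<bar> \<le> l1norm x"
      unfolding l1norm_def by (rule member_le_sum) auto
    then show ?thesis using that unfolding l1ball_def by (auto simp: abs_le_iff)
  qed
  then have "(l1ball r :: (int ^ 'd) set) \<subseteq> vec_nth -` (PiE (UNIV :: 'd set) (\<lambda>_. {-r..r}))"
    using comp by (auto simp: PiE_def extensional_def simp del: atLeastAtMost_iff)
  moreover have "finite (vec_nth -` (PiE (UNIV :: 'd set) (\<lambda>_. {-r..r})) :: (int ^ 'd) set)"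
    by (rule finite_vimageI) (auto simp: inj_def vec_eq_iff intro: finite_PiE)
  ultimately show ?thesis by (rule finite_subset)
qed

subsection \<open>Deterministic facts about the population\<close>

lemma popN_support:
  fixes A :: "nat \<Rightarrow> 'w \<Rightarrow> int ^ 'd::finite \<Rightarrow> int ^ 'd \<Rightarrow> real"
  assumes range: "\<And>s x y. s \<in> {1..n} \<Longrightarrow> int R < l1norm (x - y) \<Longrightarrow> A s \<omega> x y = 0"
  shows "s \<le> n \<Longrightarrow> int (s * R) < l1norm x \<Longrightarrow> popN A s \<omega> x = 0"
proof (induction s arbitrary: x)
  case 0
  then show ?case by auto
next
  case (Suc s)
  have "popN A s \<omega> z * A (Suc s) \<omega> z x = 0" for z
  proof (cases "int (s * R) < l1norm z")
    case True
    then show ?thesis using Suc by simp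
  next
    case False
    then have "int R < l1norm (x - z)"
      using Suc.prems(2) by (intro l1norm_far[of z "int (s * R)"]) auto
    then show ?thesis using range[of "Suc s" z x] Suc.prems(1) l1norm_minus_commute[of x z] by simp
  qed
  then show ?case by (simp add: infsum_0)
qed

lemma popN_Suc_finite:
  fixes A :: "nat \<Rightarrow> 'w \<Rightarrow> int ^ 'd::finite \<Rightarrow> int ^ 'd \<Rightarrow> real"
  assumes range: "\<And>s x y. s \<in> {1..n} \<Longrightarrow> int R < l1norm (x - y) \<Longrightarrow> A s \<omega> x y = 0"
    and "s < n"
  shows "popN A (Suc s) \<omega> y = (\<Sum>x\<in>l1ball (int (s * R)). popN A s \<omega> x * A (Suc s) \<omega> x y)"
  unfolding popN.simps
  by (rule infsum_finite_support)
    (use popN_support[where n = n and R = R and A = A and \<omega> = \<omega>, OF range] \<open>s < n\<close> in auto)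

lemma popN_nonneg:
  fixes A :: "nat \<Rightarrow> 'w \<Rightarrow> int ^ 'd::finite \<Rightarrow> int ^ 'd \<Rightarrow> real"
  assumes "\<And>s x y. s \<in> {1..n} \<Longrightarrow> 0 \<le> A s \<omega> x y"
  shows "s \<le> n \<Longrightarrow> 0 \<le> popN A s \<omega> x"
  by (induction s arbitrary: x) (auto intro!: infsum_nonneg mult_nonneg_nonneg assms)

lemma popN_measurable:
  fixes A :: "nat \<Rightarrow> 'w \<Rightarrow> int ^ 'd::finite \<Rightarrow> int ^ 'd \<Rightarrow> real"
  assumes "\<And>i x y. i \<in> {1..s} \<Longrightarrow> (\<lambda>\<omega>. A i \<omega> x y) \<in> borel_measurable N"
  shows "(\<lambda>\<omega>. popN A s \<omega> x) \<in> borel_measurable N"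
  using assms by (induction s arbitrary: x) (simp, measurable, auto)

lemma popN_cong:
  fixes A :: "nat \<Rightarrow> 'w \<Rightarrow> int ^ 'd::finite \<Rightarrow> int ^ 'd \<Rightarrow> real"
    and A' :: "nat \<Rightarrow> 'v \<Rightarrow> int ^ 'd \<Rightarrow> int ^ 'd \<Rightarrow> real"
  assumes "\<And>i x y. i \<in> {1..s} \<Longrightarrow> A i \<omega> x y = A' i \<omega>' x y"
  shows "popN A s \<omega> x = popN A' s \<omega>' x"
  using assms by (induction s arbitrary: x) auto

subsection \<open>The random walk as a deterministic population\<close>

text \<open>The law of \<open>S\<^sub>s\<close> is the population driven by the constant matrix \<open>p (y - x)\<close>;
  this transfers the support and recursion facts to the random walk.\<close>
lemma rw_dist_as_popN:
  "rw_dist p s x = popN (\<lambda>_ _ u v. p (v - u)) s \<omega> x"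
proof (induction s arbitrary: x)
  case 0
  then show ?case by simp
next
  case (Suc s)
  have bij: "bij_betw (\<lambda>z. x - z) UNIV UNIV"
    by (rule bij_betwI[of _ _ _ "\<lambda>z. x - z"]) auto
  have "rw_dist p (Suc s) x = (\<Sum>\<^sub>\<infinity>z. rw_dist p s (x - (x - z)) * p (x - z))"
    using infsum_reindex_bij_betw[OF bij, of "\<lambda>y. rw_dist p s (x - y) * p y"] by simp
  then show ?case using Suc by simp
qed

lemma rw_dist_support:
  fixes p :: "int ^ 'd::finite \<Rightarrow> real"
  assumes "\<And>z. int R < l1norm z \<Longrightarrow> p z = 0" "int (s * R) < l1norm x"
  shows "rw_dist p s x = 0"
proof -
  have "p (v - u) = 0" if "int R < l1norm (u - v)" for u v
    using assms(1) that l1norm_minus_commute by metis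
  then have "popN (\<lambda>_ _ u v. p (v - u)) s () x = 0"
    by (intro popN_support[where n = s and R = R]) (use assms(2) in auto)
  then show ?thesis by (simp add: rw_dist_as_popN[where \<omega> = "()"])
qed

lemma rw_dist_Suc_finite:
  fixes p :: "int ^ 'd::finite \<Rightarrow> real"
  assumes "\<And>z. int R < l1norm z \<Longrightarrow> p z = 0"
  shows "rw_dist p (Suc s) x = (\<Sum>y\<in>l1ball (int (s * R)). rw_dist p s y * p (x - y))"
proof -
  have "p (v - u) = 0" if "int R < l1norm (u - v)" for u v
    using assms that l1norm_minus_commute by metis
  then have "popN (\<lambda>_ _ u v. p (v - u)) (Suc s) () x
      = (\<Sum>y\<in>l1ball (int (s * R)). popN (\<lambda>_ _ u v. p (v - u)) s () y * p (x - y))"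
    by (intro popN_Suc_finite[where n = "Suc s" and R = R]) auto
  then show ?thesis by (simp add: rw_dist_as_popN[where \<omega> = "()"])
qed

lemma rw_dist_scale:
  "rw_dist (\<lambda>y. p y / c) s x = rw_dist p s x / c ^ s"
proof (induction s arbitrary: x)
  case 0
  then show ?case by simp
next
  case (Suc s)
  have "rw_dist (\<lambda>y. p y / c) (Suc s) x = (\<Sum>\<^sub>\<infinity>y. rw_dist p s (x - y) * p y * inverse (c ^ Suc s))"
    using Suc by (simp add: field_simps)
  also have "\<dots> = rw_dist p (Suc s) x / c ^ Suc s"
    by (simp add: infsum_cmult_left' divide_inverse)
  finally show ?case .
qed

subsection \<open>The deterministic inequality\<close>

text \<open>For a probability vector \<open>c\<close> on \<open>G\<close>, Cauchy--Schwarz on \<open>\<Lambda>\<close> and \<open>m\<^sup>2 \<ge> 2m - 1\<close>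
  (for the mass \<open>m\<close> inside \<open>\<Lambda>\<close>) bound \<open>1 - 2 c(G - \<Lambda>)\<close> by \<open>|\<Lambda>|\<close> times the collision mass.\<close>
lemma mass_outside_bound:
  fixes c :: "'a \<Rightarrow> real"
  assumes "finite G" "finite \<Lambda>" "\<And>x. x \<in> G \<Longrightarrow> 0 \<le> c x" "(\<Sum>x\<in>G. c x) = 1"
  shows "1 - 2 * (\<Sum>x\<in>G - \<Lambda>. c x) \<le> real (card \<Lambda>) * (\<Sum>x\<in>G. (c x)\<^sup>2)"
proof -
  define m where "m = (\<Sum>x\<in>G \<inter> \<Lambda>. c x)"
  have split: "m + (\<Sum>x\<in>G - \<Lambda>. c x) = 1"
    unfolding m_def using sum.Int_Diff[OF assms(1), of c \<Lambda>] assms(4) by simp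
  have "m\<^sup>2 \<le> (\<Sum>x\<in>G \<inter> \<Lambda>. (c x)\<^sup>2) * card (G \<inter> \<Lambda>)"
    unfolding m_def by (rule sum_squared_le_sum_of_squares)
  also have "\<dots> \<le> (\<Sum>x\<in>G. (c x)\<^sup>2) * card \<Lambda>"
    using assms(1,2) by (intro mult_mono sum_mono2 card_mono) (auto intro: sum_nonneg card_mono)
  finally have "m\<^sup>2 \<le> (\<Sum>x\<in>G. (c x)\<^sup>2) * card \<Lambda>" .
  moreover have "2 * m - 1 \<le> m\<^sup>2"
    using zero_le_power2[of "m - 1"] by (simp add: power2_diff)
  ultimately show ?thesis using split by (simp add: mult.commute)
qed

text \<open>Multiplying by \<open>n\<^sup>h\<close> and using \<open>q \<le> q\<^sup>h\<close> on \<open>[0, 1]\<close>.\<close>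
lemma powr_scaled_bound:
  fixes n q b h :: real
  assumes "0 \<le> n" "0 \<le> q" "q \<le> 1" "0 < h" "h < 1" "1 - 2 * q \<le> b"
  shows "n powr h - 2 * (n * q) powr h \<le> n powr h * b"
proof -
  have "q \<le> q powr h"
    using powr_mono'[of h 1 q] assms by (cases "q = 0") auto
  then have "n powr h * q \<le> (n * q) powr h"
    using assms(1,2) by (simp add: powr_mult mult_left_mono)
  moreover have "n powr h * (1 - 2 * q) \<le> n powr h * b"
    using assms(6) by (simp add: mult_left_mono)
  ultimately show ?thesis by (simp add: algebra_simps)
qed

definition normalized :: "(int ^ 'd::finite \<Rightarrow> real) \<Rightarrow> int ^ 'd \<Rightarrow> real" where
  "normalized p y = (if total p > 0 then p y / total p else 0)"

lemma rho_eq_normalized: "rho A t \<omega> = normalized (popN A t \<omega>)"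
  by (simp add: fun_eq_iff rho_def normalized_def)

context
  fixes p ab :: "int ^ 'd::finite \<Rightarrow> real" and F G :: "(int ^ 'd) set"
  assumes p_nonneg: "\<And>x. 0 \<le> p x" and p_supp: "\<And>x. x \<notin> F \<Longrightarrow> p x = 0"
    and finite_F: "finite F"
    and ab_nonneg: "\<And>z. 0 \<le> ab z" and ab_supp: "\<And>x y. y \<in> F \<Longrightarrow> x \<notin> G \<Longrightarrow> ab (x - y) = 0"
    and finite_G: "finite G" and ab_mass: "\<And>y. y \<in> F \<Longrightarrow> (\<Sum>x\<in>G. ab (x - y)) = 1"
begin

lemma total_eq_sum: "total p = (\<Sum>x\<in>F. p x)"
  using total_finite_support[OF finite_F p_supp] p_nonneg by simp

lemma smeared_mass: "(\<Sum>x\<in>G. \<Sum>y\<in>F. ab (x - y) * p y) = total p"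
proof -
  have "(\<Sum>x\<in>G. \<Sum>y\<in>F. ab (x - y) * p y) = (\<Sum>y\<in>F. (\<Sum>x\<in>G. ab (x - y)) * p y)"
    by (subst sum.swap) (simp add: sum_distrib_right)
  then show ?thesis by (simp add: ab_mass total_eq_sum)
qed

text \<open>The smoothed normalised configuration \<open>ab * \<rho>\<close> is the smoothed configuration divided
  by its mass (both sides vanish when the mass is zero).\<close>
lemma conv_normalized_eq: "conv ab (normalized p) x = (\<Sum>y\<in>F. ab (x - y) * p y) / total p"
proof (cases "total p > 0")
  case True
  have "conv ab (normalized p) x = (\<Sum>y\<in>F. ab (x - y) * (p y / total p))"
    unfolding conv_def normalized_def using True
    by (simp, intro infsum_finite_support) (use finite_F p_supp in auto)
  then show ?thesis by (simp add: sum_divide_distrib)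
next
  case False
  then show ?thesis using total_nonneg[of p] unfolding conv_def normalized_def by simp
qed

lemma conv_normalized_nonneg: "0 \<le> conv ab (normalized p) x"
  unfolding conv_normalized_eq
  by (intro divide_nonneg_nonneg sum_nonneg mult_nonneg_nonneg ab_nonneg p_nonneg total_nonneg)

lemma conv_normalized_mass: "total p \<noteq> 0 \<Longrightarrow> (\<Sum>x\<in>G. conv ab (normalized p) x) = 1"
  unfolding conv_normalized_eq by (simp add: sum_divide_distrib[symmetric] smeared_mass)

lemma total_sq_conv_normalized:
  shows "total (\<lambda>x. (conv ab (normalized p) x)\<^sup>2) = (\<Sum>x\<in>G. (conv ab (normalized p) x)\<^sup>2)"
    and "total (\<lambda>x. (conv ab (normalized p) x)\<^sup>2) \<le> 1"
proof -
  let ?c = "conv ab (normalized p)"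
  have "?c x = 0" if "x \<notin> G" for x
    unfolding conv_normalized_eq using ab_supp that by simp
  then show sq: "total (\<lambda>x. (?c x)\<^sup>2) = (\<Sum>x\<in>G. (?c x)\<^sup>2)"
    using total_finite_support[OF finite_G, of "\<lambda>x. (?c x)\<^sup>2"] by simp
  have mass: "(\<Sum>x\<in>G. ?c x) \<le> 1"
    using conv_normalized_mass by (cases "total p = 0") (simp_all add: conv_normalized_eq)
  have "?c x \<le> 1" if "x \<in> G" for x
    using member_le_sum[OF that, of ?c] conv_normalized_nonneg finite_G mass by simp
  then have "(?c x)\<^sup>2 \<le> ?c x" if "x \<in> G" for x
    using conv_normalized_nonneg[of x] that by (simp add: power2_eq_square mult_left_le_one_le)
  then have "(\<Sum>x\<in>G. (?c x)\<^sup>2) \<le> (\<Sum>x\<in>G. ?c x)" by (rule sum_mono)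
  then show "total (\<lambda>x. (?c x)\<^sup>2) \<le> 1" using sq mass by simp
qed

text \<open>The inequality of the theorem before taking expectations: \<open>n\<close> is the mass of
  \<open>p / K\<close> and the second term is the mass of \<open>ab * (p / K)\<close> outside \<open>\<Lambda>\<close>.\<close>
lemma pointwise_bound:
  assumes "0 < K" "0 < h" "h < 1" "finite \<Lambda>"
  shows "total (\<lambda>x. p x / K) powr h - 2 * (\<Sum>x\<in>G - \<Lambda>. \<Sum>y\<in>F. ab (x - y) * (p y / K)) powr h
      \<le> real (card \<Lambda>) * (total (\<lambda>x. p x / K) powr h * total (\<lambda>x. (conv ab (normalized p) x)\<^sup>2))"
proof (cases "total p = 0")
  case True
  then have "p y = 0" for y
    using total_eq_sum sum_nonneg_eq_0_iff[OF finite_F] p_nonneg p_supp by metis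
  then show ?thesis by (simp add: total_def)
next
  case False
  let ?c = "conv ab (normalized p)"
  define n where "n = total p / K"
  define q where "q = (\<Sum>x\<in>G - \<Lambda>. ?c x)"
  have n_eq: "total (\<lambda>x. p x / K) = n"
    unfolding n_def using total_finite_support[OF finite_F, of "\<lambda>x. p x / K"] p_supp p_nonneg \<open>0 < K\<close>
    by (simp add: total_eq_sum sum_divide_distrib)
  have "(\<Sum>y\<in>F. ab (x - y) * (p y / K)) = n * ?c x" for x
    unfolding n_def conv_normalized_eq using False
    by (simp add: sum_divide_distrib[symmetric] field_simps)
  then have outside: "(\<Sum>x\<in>G - \<Lambda>. \<Sum>y\<in>F. ab (x - y) * (p y / K)) = n * q"
    unfolding q_def by (simp add: sum_distrib_left)
  have "q \<le> (\<Sum>x\<in>G. ?c x)"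
    unfolding q_def using finite_G conv_normalized_nonneg by (intro sum_mono2) auto
  then have "q \<le> 1" using conv_normalized_mass[OF False] by simp
  moreover have "0 \<le> q" unfolding q_def using conv_normalized_nonneg by (simp add: sum_nonneg)
  moreover have "0 \<le> n" unfolding n_def using \<open>0 < K\<close> by (simp add: total_nonneg)
  moreover have "1 - 2 * q \<le> real (card \<Lambda>) * (\<Sum>x\<in>G. (?c x)\<^sup>2)"
    unfolding q_def
    using mass_outside_bound[OF finite_G \<open>finite \<Lambda>\<close> _ conv_normalized_mass[OF False]]
      conv_normalized_nonneg
    by simp
  ultimately have "n powr h - 2 * (n * q) powr h \<le> n powr h * (real (card \<Lambda>) * (\<Sum>x\<in>G. (?c x)\<^sup>2))"
    using assms(2,3) by (intro powr_scaled_bound) auto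
  then show ?thesis
    unfolding n_eq outside total_sq_conv_normalized(1) by (simp add: algebra_simps)
qed

end

subsection \<open>Jensen's inequality for \<open>u \<mapsto> u\<^sup>h\<close>\<close>

text \<open>Concavity of \<open>u\<^sup>h\<close> in the form of its tangent at \<open>1\<close> (Young's inequality).\<close>
lemma powr_le_tangent:
  fixes u h :: real
  assumes "0 \<le> u" "0 < h" "h < 1"
  shows "u powr h \<le> (1 - h) + h * u"
proof (cases "u = 0")
  case True
  then show ?thesis using assms by simp
next
  case False
  then have "u powr h * 1 powr (1 - h) \<le> h * u + (1 - h) * 1"
    using assms by (intro Youngs_inequality_0) auto
  then show ?thesis by simp
qed

lemma (in prob_space) powr_jensen:
  fixes Y :: "'a \<Rightarrow> real"
  assumes Y: "integrable M Y" and nonneg: "AE \<omega> in M. 0 \<le> Y \<omega>" and h: "0 < h" "h < 1"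
  shows "integrable M (\<lambda>\<omega>. Y \<omega> powr h)"
    and "(\<integral>\<omega>. Y \<omega> powr h \<partial>M) \<le> (\<integral>\<omega>. Y \<omega> \<partial>M) powr h"
proof -
  have [measurable]: "Y \<in> borel_measurable M" using Y by auto
  show integrable: "integrable M (\<lambda>\<omega>. Y \<omega> powr h)"
  proof (rule Bochner_Integration.integrable_bound[of _ "\<lambda>\<omega>. 1 + Y \<omega>"])
    show "AE \<omega> in M. norm (Y \<omega> powr h) \<le> norm (1 + Y \<omega>)"
      using nonneg
    proof eventually_elim
      case (elim \<omega>)
      have "h * Y \<omega> \<le> Y \<omega>" using elim h by (simp add: mult_left_le_one_le)
      then show ?case using powr_le_tangent[OF elim h] elim h by simp
    qed
  qed (use Y in auto)
  define m where "m = (\<integral>\<omega>. Y \<omega> \<partial>M)"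
  have "0 \<le> m" unfolding m_def using nonneg by (rule integral_nonneg_AE)
  show "(\<integral>\<omega>. Y \<omega> powr h \<partial>M) \<le> m powr h"
  proof (cases "m = 0")
    case True
    then have "AE \<omega> in M. Y \<omega> = 0"
      using integral_nonneg_eq_0_iff_AE[OF Y nonneg] unfolding m_def by simp
    then have "AE \<omega> in M. Y \<omega> powr h = 0" by eventually_elim simp
    then show ?thesis using True by (simp add: integral_eq_zero_AE)
  next
    case False
    with \<open>0 \<le> m\<close> have "0 < m" by simp
    have "AE \<omega> in M. Y \<omega> powr h \<le> m powr h * ((1 - h) + h * (Y \<omega> / m))"
      using nonneg
    proof eventually_elim
      case (elim \<omega>)
      have "Y \<omega> powr h = m powr h * (Y \<omega> / m) powr h"
        using \<open>0 < m\<close> elim by (simp add: powr_divide)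
      also have "\<dots> \<le> m powr h * ((1 - h) + h * (Y \<omega> / m))"
        using powr_le_tangent[of "Y \<omega> / m" h] elim \<open>0 < m\<close> h by (intro mult_left_mono) auto
      finally show ?case .
    qed
    then have "(\<integral>\<omega>. Y \<omega> powr h \<partial>M) \<le> (\<integral>\<omega>. m powr h * ((1 - h) + h * (Y \<omega> / m)) \<partial>M)"
      by (intro integral_mono_AE integrable) (use Y in simp)
    also have "\<dots> = m powr h"
      using Y \<open>0 < m\<close> unfolding m_def by (simp add: prob_space)
    finally show ?thesis .
  qed
qed

subsection \<open>Transfer along equality of laws\<close>

context prob_space
begin

lemma same_law_AE:
  fixes X Y :: "'a \<Rightarrow> real"
  assumes [measurable]: "X \<in> borel_measurable M" "Y \<in> borel_measurable M"
    and law: "distr M borel X = distr M borel Y" and [measurable]: "Measurable.pred borel P"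
  shows "(AE \<omega> in M. P (X \<omega>)) \<longleftrightarrow> (AE \<omega> in M. P (Y \<omega>))"
proof -
  have "(AE \<omega> in M. P (X \<omega>)) \<longleftrightarrow> (AE v in distr M borel X. P v)"
    by (rule AE_distr_iff[symmetric]) measurable
  also have "\<dots> \<longleftrightarrow> (AE \<omega> in M. P (Y \<omega>))"
    unfolding law by (rule AE_distr_iff) measurable
  finally show ?thesis .
qed

lemma same_law_integrable:
  fixes X Y :: "'a \<Rightarrow> real"
  assumes "X \<in> borel_measurable M" "Y \<in> borel_measurable M" "distr M borel X = distr M borel Y"
  shows "integrable M X \<longleftrightarrow> integrable M Y"
  using integrable_distr_eq[OF assms(1), of "\<lambda>x. x"] integrable_distr_eq[OF assms(2), of "\<lambda>x. x"] assms(3)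
  by simp

lemma same_law_integral:
  fixes X Y :: "'a \<Rightarrow> real"
  assumes "X \<in> borel_measurable M" "Y \<in> borel_measurable M" "distr M borel X = distr M borel Y"
  shows "(\<integral>\<omega>. X \<omega> \<partial>M) = (\<integral>\<omega>. Y \<omega> \<partial>M)"
  using integral_distr[OF assms(1), of "\<lambda>x. x"] integral_distr[OF assms(2), of "\<lambda>x. x"] assms(3)
  by simp

lemma AE_all_entries:
  fixes P :: "nat \<Rightarrow> 'i::countable \<Rightarrow> 'j::countable \<Rightarrow> 'a \<Rightarrow> bool"
  assumes "\<And>s x y. s \<in> {1..n} \<Longrightarrow> AE \<omega> in M. P s x y \<omega>"
  shows "AE \<omega> in M. \<forall>s\<in>{1..n}. \<forall>x y. P s x y \<omega>"
  using assms by (intro AE_ball_countable') (auto simp: AE_all_countable)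

end

subsection \<open>The random environment\<close>

text \<open>The hypotheses on the matrices \<open>A\<^sub>t\<close> used by the argument: the matrices are i.i.d.,
  their entries are nonnegative, square integrable and of range \<open>r\<^sub>A\<close>, and the law of \<open>A\<^sub>1\<close>
  is shift invariant.\<close>
locale random_matrices = prob_space M
  for M :: "'w measure" +
  fixes A :: "nat \<Rightarrow> 'w \<Rightarrow> int ^ 'd::finite \<Rightarrow> int ^ 'd \<Rightarrow> real" and rA :: nat
  assumes iid_indep: "indep_vars (\<lambda>_. PiM UNIV (\<lambda>_. borel)) (\<lambda>s \<omega> (x, y). A s \<omega> x y) {1..}"
    and iid_distr: "\<And>s. 1 \<le> s \<Longrightarrow> distr M (PiM UNIV (\<lambda>_. borel)) (\<lambda>\<omega> (x, y). A s \<omega> x y)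
                                  = distr M (PiM UNIV (\<lambda>_. borel)) (\<lambda>\<omega> (x, y). A 1 \<omega> x y)"
    and nonneg: "\<And>\<omega> x y. \<omega> \<in> space M \<Longrightarrow> 0 \<le> A 1 \<omega> x y"
    and sq_int: "\<And>x y. integrable M (\<lambda>\<omega>. (A 1 \<omega> x y)\<^sup>2)"
    and range: "\<And>x y. int rA < l1norm (x - y) \<Longrightarrow> AE \<omega> in M. A 1 \<omega> x y = 0"
    and shift: "\<And>z. distr M (PiM UNIV (\<lambda>_. borel)) (\<lambda>\<omega> (x, y). A 1 \<omega> (x + z) (y + z))
                     = distr M (PiM UNIV (\<lambda>_. borel)) (\<lambda>\<omega> (x, y). A 1 \<omega> x y)"
begin

abbreviation matrix_space :: "((int ^ 'd) \<times> (int ^ 'd) \<Rightarrow> real) measure" where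
  "matrix_space \<equiv> PiM UNIV (\<lambda>_. borel)"

abbreviation entries :: "nat \<Rightarrow> 'w \<Rightarrow> (int ^ 'd) \<times> (int ^ 'd) \<Rightarrow> real" where
  "entries s \<omega> \<equiv> \<lambda>(x, y). A s \<omega> x y"

lemma entry_eval_measurable [measurable]: "(\<lambda>F. F (x, y)) \<in> borel_measurable matrix_space"
  by (rule measurable_component_singleton) simp

lemma entries_measurable: "1 \<le> s \<Longrightarrow> entries s \<in> measurable M matrix_space"
  using iid_indep unfolding indep_vars_def by auto

lemma A_measurable: "1 \<le> s \<Longrightarrow> (\<lambda>\<omega>. A s \<omega> x y) \<in> borel_measurable M"
  using measurable_compose[OF entries_measurable entry_eval_measurable[of x y]] by simp

lemma entry_law: "1 \<le> s \<Longrightarrow> distr M borel (\<lambda>\<omega>. A s \<omega> x y) = distr M borel (\<lambda>\<omega>. A 1 \<omega> x y)"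
  using distr_distr[OF entry_eval_measurable[of x y] entries_measurable, of s]
    distr_distr[OF entry_eval_measurable[of x y] entries_measurable, of 1] iid_distr[of s]
  by (simp add: comp_def)

lemma entry_law_shift: "distr M borel (\<lambda>\<omega>. A 1 \<omega> x y) = distr M borel (\<lambda>\<omega>. A 1 \<omega> 0 (y - x))"
proof -
  let ?shifted = "\<lambda>\<omega> (u, v). A 1 \<omega> (u + x) (v + x)"
  have "?shifted \<in> measurable M matrix_space"
  proof (rule measurable_PiM_single')
    fix i :: "(int ^ 'd) \<times> (int ^ 'd)"
    show "(\<lambda>\<omega>. ?shifted \<omega> i) \<in> borel_measurable M"
      by (cases i) (simp add: A_measurable)
  qed (auto simp: PiE_def extensional_def)
  then have "distr M borel (\<lambda>\<omega>. ?shifted \<omega> (0, y - x)) = distr M borel (\<lambda>\<omega>. A 1 \<omega> 0 (y - x))"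
    using distr_distr[OF entry_eval_measurable[of 0 "y - x"], of ?shifted M]
      distr_distr[OF entry_eval_measurable[of 0 "y - x"] entries_measurable, of 1] shift[of x]
    by (simp add: comp_def)
  then show ?thesis by simp
qed

lemma AE_A_nonneg:
  assumes "1 \<le> s"
  shows "AE \<omega> in M. 0 \<le> A s \<omega> x y"
proof -
  have pred: "Measurable.pred borel (\<lambda>v::real. 0 \<le> v)" by measurable
  have "AE \<omega> in M. 0 \<le> A 1 \<omega> x y" using nonneg by (rule AE_I2)
  then show ?thesis
    using same_law_AE[OF A_measurable[OF assms] A_measurable[OF order_refl] entry_law[OF assms] pred]
    by (rule iffD2[rotated])
qed

lemma AE_A_range:
  assumes "1 \<le> s" "int rA < l1norm (x - y)"
  shows "AE \<omega> in M. A s \<omega> x y = 0"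
proof -
  have pred: "Measurable.pred borel (\<lambda>v::real. v = 0)" by measurable
  show ?thesis
    using same_law_AE[OF A_measurable[OF assms(1)] A_measurable[OF order_refl] entry_law[OF assms(1)] pred]
      range[OF assms(2)]
    by (rule iffD2)
qed

lemma A_integrable:
  assumes "1 \<le> s"
  shows "integrable M (\<lambda>\<omega>. A s \<omega> x y)"
  using same_law_integrable[OF A_measurable[OF assms] A_measurable[OF order_refl] entry_law[OF assms]]
    square_integrable_imp_integrable[OF A_measurable[OF order_refl] sq_int]
  by (rule iffD2)

lemma A_mean:
  assumes "1 \<le> s"
  shows "(\<integral>\<omega>. A s \<omega> x y \<partial>M) = meanA M A (y - x)"
proof -
  have "(\<integral>\<omega>. A s \<omega> x y \<partial>M) = (\<integral>\<omega>. A 1 \<omega> x y \<partial>M)"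
    by (rule same_law_integral[OF A_measurable[OF assms] A_measurable[OF order_refl] entry_law[OF assms]])
  also have "\<dots> = (\<integral>\<omega>. A 1 \<omega> 0 (y - x) \<partial>M)"
    by (rule same_law_integral[OF A_measurable[OF order_refl] A_measurable[OF order_refl] entry_law_shift])
  finally show ?thesis unfolding meanA_def .
qed

lemma meanA_nonneg: "0 \<le> meanA M A y"
  unfolding meanA_def using nonneg by (auto intro: integral_nonneg)

lemma meanA_range: "int rA < l1norm y \<Longrightarrow> meanA M A y = 0"
  unfolding meanA_def using range[of 0 y] l1norm_minus_commute[of 0 y]
  by (auto intro: integral_eq_zero_AE)

lemma AE_nonneg_upto: "AE \<omega> in M. \<forall>s\<in>{1..n}. \<forall>x y. 0 \<le> A s \<omega> x y"
  by (rule AE_all_entries) (use AE_A_nonneg in auto)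

lemma AE_range_upto: "AE \<omega> in M. \<forall>s\<in>{1..n}. \<forall>x y. int rA < l1norm (x - y) \<longrightarrow> A s \<omega> x y = 0"
proof (rule AE_all_entries)
  fix s x y
  assume "s \<in> {1..n}"
  then show "AE \<omega> in M. int rA < l1norm (x - y) \<longrightarrow> A s \<omega> x y = 0"
    by (cases "int rA < l1norm (x - y)") (use AE_A_range in auto)
qed

lemma popN_random_variable [measurable]: "(\<lambda>\<omega>. popN A s \<omega> x) \<in> borel_measurable M"
  by (rule popN_measurable) (auto simp: A_measurable)

text \<open>\<open>N\<^sub>s\<close> is a function of \<open>A\<^sub>1, \<dots>, A\<^sub>s\<close>, hence independent of \<open>A\<^sub>s\<^sub>+\<^sub>1\<close>.\<close>
lemma popN_indep_next: "indep_var borel (\<lambda>\<omega>. popN A s \<omega> x) borel (\<lambda>\<omega>. A (Suc s) \<omega> x' y)"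
proof -
  let ?past = "\<lambda>\<omega>. restrict (\<lambda>i. entries i \<omega>) {1..s}"
  let ?next = "\<lambda>\<omega>. restrict (\<lambda>i. entries i \<omega>) {Suc s}"
  define f where "f = (\<lambda>F. popN (\<lambda>i F x y. F i (x, y)) s F x)"
  define g where "g = (\<lambda>F. F (Suc s) (x', y) :: real)"
  have eval: "(\<lambda>F. F i (u, v)) \<in> borel_measurable (PiM I (\<lambda>_. matrix_space))" if "i \<in> I" for i I u v
    using measurable_compose[OF measurable_component_singleton[OF that] entry_eval_measurable] by simp
  have "f \<in> borel_measurable (PiM {1..s} (\<lambda>_. matrix_space))"
    unfolding f_def by (rule popN_measurable) (rule eval)
  moreover have "g \<in> borel_measurable (PiM {Suc s} (\<lambda>_. matrix_space))"
    unfolding g_def by (rule eval) simp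
  moreover have "indep_var (PiM {1..s} (\<lambda>_. matrix_space)) ?past (PiM {Suc s} (\<lambda>_. matrix_space)) ?next"
    by (rule indep_var_restrict[OF iid_indep]) auto
  ultimately have "indep_var borel (f \<circ> ?past) borel (g \<circ> ?next)"
    by (intro indep_var_compose)
  moreover have "f \<circ> ?past = (\<lambda>\<omega>. popN A s \<omega> x)"
    unfolding f_def comp_def by (intro ext popN_cong) simp
  moreover have "g \<circ> ?next = (\<lambda>\<omega>. A (Suc s) \<omega> x' y)"
    unfolding g_def comp_def by simp
  ultimately show ?thesis by simp
qed

lemma popN_expectation:
  "integrable M (\<lambda>\<omega>. popN A s \<omega> y) \<and> (\<integral>\<omega>. popN A s \<omega> y \<partial>M) = rw_dist (meanA M A) s y"
proof (induction s arbitrary: y)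
  case 0
  then show ?case by (simp add: prob_space)
next
  case (Suc s)
  let ?B = "l1ball (int (s * rA)) :: (int ^ 'd) set"
  have summand: "integrable M (\<lambda>\<omega>. popN A s \<omega> x * A (Suc s) \<omega> x y)"
    "(\<integral>\<omega>. popN A s \<omega> x * A (Suc s) \<omega> x y \<partial>M) = rw_dist (meanA M A) s x * meanA M A (y - x)" for x
    using indep_var_integrable[OF popN_indep_next] indep_var_lebesgue_integral[OF popN_indep_next]
      Suc.IH A_integrable A_mean by auto
  let ?S = "\<lambda>\<omega>. \<Sum>x\<in>?B. popN A s \<omega> x * A (Suc s) \<omega> x y"
  have ae: "AE \<omega> in M. popN A (Suc s) \<omega> y = ?S \<omega>"
    using AE_range_upto[of "Suc s"]
  proof eventually_elim
    case (elim \<omega>)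
    show ?case by (rule popN_Suc_finite[where n = "Suc s" and R = rA]) (use elim in auto)
  qed
  have S_measurable: "?S \<in> borel_measurable M"
    by (intro borel_measurable_sum borel_measurable_times popN_random_variable A_measurable) simp
  have "integrable M ?S"
    by (intro Bochner_Integration.integrable_sum summand(1))
  then have "integrable M (\<lambda>\<omega>. popN A (Suc s) \<omega> y)"
    using integrable_cong_AE[OF popN_random_variable S_measurable ae] by (simp only:)
  moreover have "(\<integral>\<omega>. popN A (Suc s) \<omega> y \<partial>M) = (\<integral>\<omega>. ?S \<omega> \<partial>M)"
    by (rule integral_cong_AE[OF popN_random_variable S_measurable ae])
  moreover have "(\<integral>\<omega>. ?S \<omega> \<partial>M) = (\<Sum>x\<in>?B. rw_dist (meanA M A) s x * meanA M A (y - x))"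
    by (simp add: Bochner_Integration.integral_sum summand)
  moreover have "rw_dist (meanA M A) (Suc s) y = (\<Sum>x\<in>?B. rw_dist (meanA M A) s x * meanA M A (y - x))"
    by (rule rw_dist_Suc_finite) (rule meanA_range)
  ultimately show ?case by (simp only:)
qed

lemma total_meanA_pos:
  assumes "meanA M A y \<noteq> 0"
  shows "0 < total (meanA M A)"
proof -
  have "y \<in> l1ball (int rA)" using assms meanA_range by force
  moreover have "total (meanA M A) = (\<Sum>z\<in>l1ball (int rA). \<bar>meanA M A z\<bar>)"
    by (rule total_finite_support) (auto intro: meanA_range)
  ultimately show ?thesis using assms by (auto intro: sum_pos2)
qed

lemma abar_nonneg: "0 \<le> abar M A y"
  unfolding abar_def by (intro divide_nonneg_nonneg meanA_nonneg total_nonneg)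

lemma abar_range: "int rA < l1norm y \<Longrightarrow> abar M A y = 0"
  unfolding abar_def by (simp add: meanA_range)

lemma abar_window:
  assumes "y \<in> l1ball (int (T * rA))" "x \<notin> l1ball (int (Suc T * rA))"
  shows "abar M A (x - y) = 0"
  using assms by (intro abar_range l1norm_far[of y "int (T * rA)"]) auto

lemma abar_mass:
  assumes "0 < total (meanA M A)" "y \<in> l1ball (int (T * rA))"
  shows "(\<Sum>x\<in>l1ball (int (Suc T * rA)). abar M A (x - y)) = 1"
proof -
  have mass: "total (meanA M A) = (\<Sum>z\<in>l1ball (int rA). meanA M A z)"
    using total_finite_support[of "l1ball (int rA)" "meanA M A"] meanA_range meanA_nonneg by force
  have "(\<Sum>x\<in>l1ball (int (Suc T * rA)). abar M A (x - y)) = (\<Sum>z\<in>l1ball (int rA). abar M A z)"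
    by (rule sum_translate_support) (auto intro: abar_window[OF assms(2)] abar_range)
  also have "\<dots> = (\<Sum>z\<in>l1ball (int rA). meanA M A z) / total (meanA M A)"
    unfolding abar_def by (simp add: sum_divide_distrib)
  finally show ?thesis using assms(1) mass by simp
qed

lemma popN_window:
  assumes "\<forall>s\<in>{1..T}. \<forall>x y. 0 \<le> A s \<omega> x y"
    and "\<forall>s\<in>{1..T}. \<forall>x y. int rA < l1norm (x - y) \<longrightarrow> A s \<omega> x y = 0"
  shows "0 \<le> popN A T \<omega> x" and "x \<notin> l1ball (int (T * rA)) \<Longrightarrow> popN A T \<omega> x = 0"
  using popN_nonneg[of T A \<omega> T] popN_support[of T rA A \<omega> T] assms by auto

lemma Nbar_expectation:
  "integrable M (\<lambda>\<omega>. Nbar M A T \<omega> y) \<and> (\<integral>\<omega>. Nbar M A T \<omega> y \<partial>M) = rw_dist (abar M A) T y"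
  using popN_expectation[of T y] rw_dist_scale[of "meanA M A" "total (meanA M A)" T y]
  unfolding Nbar_def abar_def by simp

subsection \<open>Taking expectations\<close>

text \<open>The mass of \<open>abar * Nbar\<^sub>T\<close> outside \<open>\<Lambda>\<close>, written as the finite sum over the window
  where it lives.\<close>
definition escape_mass :: "nat \<Rightarrow> (int ^ 'd) set \<Rightarrow> 'w \<Rightarrow> real" where
  "escape_mass T \<Lambda> \<omega> = (\<Sum>x\<in>l1ball (int (Suc T * rA)) - \<Lambda>.
      \<Sum>y\<in>l1ball (int (T * rA)). abar M A (x - y) * Nbar M A T \<omega> y)"

lemma escape_mass_expectation:
  "integrable M (escape_mass T \<Lambda>)
    \<and> (\<integral>\<omega>. escape_mass T \<Lambda> \<omega> \<partial>M) = (\<Sum>\<^sub>\<infinity>x\<in>- \<Lambda>. rw_dist (abar M A) (Suc T) x)"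
proof -
  let ?G = "l1ball (int (Suc T * rA)) :: (int ^ 'd) set" and ?F = "l1ball (int (T * rA)) :: (int ^ 'd) set"
  have integrable: "integrable M (escape_mass T \<Lambda>)"
    unfolding escape_mass_def using Nbar_expectation by simp
  have "(\<integral>\<omega>. escape_mass T \<Lambda> \<omega> \<partial>M) = (\<Sum>x\<in>?G - \<Lambda>. \<Sum>y\<in>?F. abar M A (x - y) * rw_dist (abar M A) T y)"
    unfolding escape_mass_def using Nbar_expectation
    by (simp add: Bochner_Integration.integral_sum)
  also have "\<dots> = (\<Sum>x\<in>?G - \<Lambda>. rw_dist (abar M A) (Suc T) x)"
  proof -
    have step: "rw_dist (abar M A) (Suc T) x = (\<Sum>y\<in>?F. rw_dist (abar M A) T y * abar M A (x - y))" for x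
      by (rule rw_dist_Suc_finite) (rule abar_range)
    show ?thesis by (simp only: step mult.commute)
  qed
  also have "\<dots> = (\<Sum>\<^sub>\<infinity>x\<in>- \<Lambda>. rw_dist (abar M A) (Suc T) x)"
  proof (rule infsum_finite_support[symmetric])
    fix x
    assume "x \<in> - \<Lambda> - (?G - \<Lambda>)"
    then have "int (Suc T * rA) < l1norm x" by (auto simp del: of_nat_mult)
    then show "rw_dist (abar M A) (Suc T) x = 0"
      using rw_dist_support[of rA "abar M A" "Suc T" x] abar_range by blast
  qed auto
  finally show ?thesis using integrable by simp
qed

lemma AE_escape_mass_nonneg: "AE \<omega> in M. 0 \<le> escape_mass T \<Lambda> \<omega>"
  using AE_nonneg_upto[of T] AE_range_upto[of T]
proof eventually_elim
  case (elim \<omega>)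
  then show ?case
    unfolding escape_mass_def Nbar_def
    by (intro sum_nonneg mult_nonneg_nonneg divide_nonneg_nonneg abar_nonneg zero_le_power
        total_nonneg popN_window(1))
qed

lemma AE_pointwise_bound:
  assumes Z: "0 < total (meanA M A)" and h: "0 < h" "h < 1" and \<Lambda>: "finite \<Lambda>"
  shows "AE \<omega> in M. total (Nbar M A T \<omega>) powr h - 2 * escape_mass T \<Lambda> \<omega> powr h
      \<le> real (card \<Lambda>) * (total (Nbar M A T \<omega>) powr h * total (\<lambda>x. (conv (abar M A) (rho A T \<omega>) x)\<^sup>2))
    \<and> total (\<lambda>x. (conv (abar M A) (rho A T \<omega>) x)\<^sup>2) \<le> 1"
  using AE_nonneg_upto[of T] AE_range_upto[of T]
proof eventually_elim
  case (elim \<omega>)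
  note window = popN_window[OF elim] finite_l1ball abar_nonneg abar_window finite_l1ball abar_mass[OF Z]
  have Nbar: "Nbar M A T \<omega> = (\<lambda>x. popN A T \<omega> x / total (meanA M A) ^ T)"
    by (simp add: Nbar_def fun_eq_iff)
  show ?case
    using pointwise_bound[OF window _ h \<Lambda>] total_sq_conv_normalized(2)[OF window] Z
    unfolding escape_mass_def Nbar rho_eq_normalized by simp
qed

lemma total_Nbar_integrable: "integrable M (\<lambda>\<omega>. total (Nbar M A T \<omega>))"
proof -
  have "AE \<omega> in M. total (Nbar M A T \<omega>) = (\<Sum>x\<in>l1ball (int (T * rA)). Nbar M A T \<omega> x)"
    using AE_nonneg_upto[of T] AE_range_upto[of T]
  proof eventually_elim
    case (elim \<omega>)
    show ?case
      using total_finite_support[of "l1ball (int (T * rA))" "Nbar M A T \<omega>"] popN_window[OF elim]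
      unfolding Nbar_def by (simp add: abs_of_nonneg divide_nonneg_nonneg total_nonneg)
  qed
  moreover have "integrable M (\<lambda>\<omega>. \<Sum>x\<in>l1ball (int (T * rA)). Nbar M A T \<omega> x)"
    using Nbar_expectation by simp
  moreover have "(\<lambda>\<omega>. total (Nbar M A T \<omega>)) \<in> borel_measurable M"
    unfolding total_def Nbar_def by measurable
  ultimately show ?thesis
    by (subst integrable_cong_AE[where g = "\<lambda>\<omega>. \<Sum>x\<in>l1ball (int (T * rA)). Nbar M A T \<omega> x"]) auto
qed

lemma total_sq_conv_measurable:
  "(\<lambda>\<omega>. total (\<lambda>x. (conv (abar M A) (rho A T \<omega>) x)\<^sup>2)) \<in> borel_measurable M"
  unfolding total_def conv_def rho_def by measurable

lemma expected_bound:
  assumes Z: "0 < total (meanA M A)" and h: "0 < h" "h < 1" and \<Lambda>: "finite \<Lambda>"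
  shows "(\<integral>\<omega>. total (Nbar M A T \<omega>) powr h \<partial>M)
           - 2 * (\<Sum>\<^sub>\<infinity>x\<in>- \<Lambda>. rw_dist (abar M A) (Suc T) x) powr h
      \<le> real (card \<Lambda>) * (\<integral>\<omega>. total (Nbar M A T \<omega>) powr h
                                * total (\<lambda>x. (conv (abar M A) (rho A T \<omega>) x)\<^sup>2) \<partial>M)"
proof -
  let ?n = "\<lambda>\<omega>. total (Nbar M A T \<omega>) powr h"
  let ?c = "\<lambda>\<omega>. total (\<lambda>x. (conv (abar M A) (rho A T \<omega>) x)\<^sup>2)"
  let ?Y = "escape_mass T \<Lambda>"
  have n_int: "integrable M ?n"
    by (rule powr_jensen(1)[OF total_Nbar_integrable _ h]) (simp add: total_nonneg)
  have nc_int: "integrable M (\<lambda>\<omega>. ?n \<omega> * ?c \<omega>)"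
  proof (rule Bochner_Integration.integrable_bound[OF n_int])
    show "(\<lambda>\<omega>. ?n \<omega> * ?c \<omega>) \<in> borel_measurable M"
      using n_int total_sq_conv_measurable by measurable
    show "AE \<omega> in M. norm (?n \<omega> * ?c \<omega>) \<le> norm (?n \<omega>)"
      using AE_pointwise_bound[OF Z h \<Lambda>, of T]
      by eventually_elim (simp add: abs_mult total_nonneg mult_left_le)
  qed
  have Y: "integrable M ?Y" "(\<integral>\<omega>. ?Y \<omega> \<partial>M) = (\<Sum>\<^sub>\<infinity>x\<in>- \<Lambda>. rw_dist (abar M A) (Suc T) x)"
    using escape_mass_expectation by auto
  note jensen = powr_jensen[OF Y(1) AE_escape_mass_nonneg h]
  have "(\<integral>\<omega>. ?n \<omega> - 2 * ?Y \<omega> powr h \<partial>M) \<le> (\<integral>\<omega>. real (card \<Lambda>) * (?n \<omega> * ?c \<omega>) \<partial>M)"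
    using n_int nc_int jensen(1) AE_pointwise_bound[OF Z h \<Lambda>, of T]
    by (intro integral_mono_AE) auto
  then have "(\<integral>\<omega>. ?n \<omega> \<partial>M) - 2 * (\<integral>\<omega>. ?Y \<omega> powr h \<partial>M) \<le> real (card \<Lambda>) * (\<integral>\<omega>. ?n \<omega> * ?c \<omega> \<partial>M)"
    using n_int jensen(1) by simp
  moreover have "(\<integral>\<omega>. ?Y \<omega> powr h \<partial>M) \<le> (\<Sum>\<^sub>\<infinity>x\<in>- \<Lambda>. rw_dist (abar M A) (Suc T) x) powr h"
    using jensen(2) unfolding Y(2) .
  ultimately show ?thesis by linarith
qed

end

lemma nonzero_of_spanning:
  fixes a :: "int ^ 'd::finite \<Rightarrow> real"
  assumes "\<exists>B \<subseteq> to_real_vec ` {x. (\<Sum>\<^sub>\<infinity>y. a (x + y) * a y) \<noteq> 0}. independent B \<and> span B = UNIV"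
  shows "\<exists>y. a y \<noteq> 0"
proof (rule ccontr)
  assume "\<not> (\<exists>y. a y \<noteq> 0)"
  then obtain B :: "(real ^ 'd) set" where "B = {}" "span B = UNIV"
    using assms by auto
  then have "(1 :: real ^ 'd) = 0" by auto
  then show False by simp
qed

theorem lemma3p4:
  fixes M :: "'w measure"
    and A :: "nat \<Rightarrow> 'w \<Rightarrow> int ^ 'd::finite \<Rightarrow> int ^ 'd \<Rightarrow> real"
    and rA :: nat and h :: real and \<Lambda> :: "(int ^ 'd) set" and t :: nat
  assumes P: "prob_space M"
    and iid_indep: "prob_space.indep_vars M (\<lambda>_. PiM UNIV (\<lambda>_. borel))
                      (\<lambda>s \<omega> (x, y). A s \<omega> x y) {1..}"
    and iid_distr: "\<forall>s\<ge>1. distr M (PiM UNIV (\<lambda>_. borel)) (\<lambda>\<omega> (x, y). A s \<omega> x y)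
                           = distr M (PiM UNIV (\<lambda>_. borel)) (\<lambda>\<omega> (x, y). A 1 \<omega> x y)"
    and nonneg: "\<forall>\<omega>\<in>space M. \<forall>x y. A 1 \<omega> x y \<ge> 0"
    and col_indep: "prob_space.indep_vars M (\<lambda>_. PiM UNIV (\<lambda>_. borel))
                      (\<lambda>y \<omega> x. A 1 \<omega> x y) UNIV"
    and sq_int: "\<forall>x y. integrable M (\<lambda>\<omega>. (A 1 \<omega> x y)\<^sup>2)"
    and range: "\<forall>x y. l1norm (x - y) > int rA \<longrightarrow> (AE \<omega> in M. A 1 \<omega> x y = 0)"
    and shift: "\<forall>z. distr M (PiM UNIV (\<lambda>_. borel)) (\<lambda>\<omega> (x, y). A 1 \<omega> (x + z) (y + z))
                    = distr M (PiM UNIV (\<lambda>_. borel)) (\<lambda>\<omega> (x, y). A 1 \<omega> x y)"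
    and basis: "\<exists>B \<subseteq> to_real_vec ` {x. (\<Sum>\<^sub>\<infinity>y. meanA M A (x + y) * meanA M A y) \<noteq> 0}.
                   independent B \<and> span B = UNIV"
    and h: "0 < h" "h < 1"
    and fin: "finite \<Lambda>"
    and t: "t \<ge> 1"
  shows "real (card \<Lambda>) *
           (\<integral>\<omega>. total (Nbar M A (t - 1) \<omega>) powr h
                 * total (\<lambda>x. (conv (abar M A) (rho A (t - 1) \<omega>) x)\<^sup>2) \<partial>M)
         \<ge> (\<integral>\<omega>. total (Nbar M A (t - 1) \<omega>) powr h \<partial>M)
           - 2 * (\<Sum>\<^sub>\<infinity>x\<in>- \<Lambda>. rw_dist (abar M A) t x) powr h"
proof -
  interpret random_matrices M A rA
    by (rule random_matrices.intro[OF P random_matrices_axioms.intro, OF iid_indep iid_distr[rule_format]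
          nonneg[rule_format] sq_int[rule_format] range[rule_format] shift[rule_format]])
  obtain y where "meanA M A y \<noteq> 0"
    using nonzero_of_spanning[OF basis] by blast
  then have mass: "0 < total (meanA M A)" by (rule total_meanA_pos)
  obtain T where tT: "t = Suc T" using t by (cases t) auto
  show ?thesis using expected_bound[OF mass h fin, of T] unfolding tT diff_Suc_1 .
qed

end
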